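(* The map $\mathrm{mult}:\mathcal{F}_1\to\mathcal{F}_0$, $x\otimes y\mapsto xy$, is bounded and satisfies $\mathrm{mult}\,\mathrm{mult}^*=1$; hence it extends to a bounded linear map $L^2(M^2)\to L^2(M)$.
   Context: $M=\ell^\infty\text{-}\bigoplus_{i\in I}M_i$ with $M_i=\mathbb{C}^{d_i\times d_i}$, $M_0$ the finitely supported part, $E^i_{k,l}$ matrix units. $\omega$ is a delta-form: $\omega(x)=\mathrm{tr}_M(x\sigma)$ where $\mathrm{tr}_M(E^i_{k,l})=\delta_{k,l}d_i$ and $\sigma=\sum_i\sigma_i$ ($\sigma_i\in M_i$) is positive invertible with $\mathrm{Tr}(\sigma_i^{-1})=d_i$. $\mathcal{F}_n=M_0^{\otimes(n+1)}$ with inner product $\langle x_0\otimes\cdots\otimes x_n,y_0\otimes\cdots\otimes y_n\rangle=\prod_j\omega(y_j^*x_j)$; $L^2(M^{n+1})$ is its completion. *)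

theory Defs
  imports "HOL-Analysis.Analysis"
begin

text \<open>
  The index set I is a type 'i, with block sizes d :: 'i => nat.
  A matrix-unit index is a triple (i,k,l), meaning E^i_{k,l} (0-based, k,l < d i).
  An element x of M (or of any block-diagonal object) is a coefficient function
  x :: 'i * nat * nat => complex; x (i,k,l) is the (k,l) entry of the block x_i.
\<close>

type_synonym 'i mu = "'i \<times> nat \<times> nat"

definition valid :: "('i \<Rightarrow> nat) \<Rightarrow> 'i mu set" where
  "valid d = {(i,k,l). k < d i \<and> l < d i}"

definition supp :: "('a \<Rightarrow> complex) \<Rightarrow> 'a set" where
  "supp x = {a. x a \<noteq> 0}"

definition M0 :: "('i \<Rightarrow> nat) \<Rightarrow> ('i mu \<Rightarrow> complex) set" where
  "M0 d = {x. supp x \<subseteq> valid d \<and> finite (supp x)}"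

definition munit :: "'i mu \<Rightarrow> 'i mu \<Rightarrow> complex" where
  "munit a = (\<lambda>b. if b = a then 1 else 0)"

definition mmul :: "('i \<Rightarrow> nat) \<Rightarrow> ('i mu \<Rightarrow> complex) \<Rightarrow> ('i mu \<Rightarrow> complex) \<Rightarrow> 'i mu \<Rightarrow> complex" where
  "mmul d x y = (\<lambda>(i,k,l). \<Sum>m<d i. x (i,k,m) * y (i,m,l))"

definition madj :: "('i mu \<Rightarrow> complex) \<Rightarrow> 'i mu \<Rightarrow> complex" where
  "madj x = (\<lambda>(i,k,l). cnj (x (i,l,k)))"

definition trM :: "('i \<Rightarrow> nat) \<Rightarrow> ('i mu \<Rightarrow> complex) \<Rightarrow> complex" where
  "trM d x = (\<Sum>i\<in>fst ` supp x. of_nat (d i) * (\<Sum>k<d i. x (i,k,k)))"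

definition omega :: "('i \<Rightarrow> nat) \<Rightarrow> ('i mu \<Rightarrow> complex) \<Rightarrow> ('i mu \<Rightarrow> complex) \<Rightarrow> complex" where
  "omega d \<sigma> x = trM d (mmul d x \<sigma>)"

definition blk_positive :: "nat \<Rightarrow> (nat \<Rightarrow> nat \<Rightarrow> complex) \<Rightarrow> bool" where
  "blk_positive n A \<longleftrightarrow> (\<forall>v :: nat \<Rightarrow> complex.
      let q = (\<Sum>k<n. \<Sum>l<n. cnj (v k) * A k l * v l) in Im q = 0 \<and> Re q \<ge> 0)"

definition blk_mul :: "nat \<Rightarrow> (nat \<Rightarrow> nat \<Rightarrow> complex) \<Rightarrow> (nat \<Rightarrow> nat \<Rightarrow> complex) \<Rightarrow> nat \<Rightarrow> nat \<Rightarrow> complex" where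
  "blk_mul n A B = (\<lambda>k l. \<Sum>m<n. A k m * B m l)"

definition blk_is_inverse :: "nat \<Rightarrow> (nat \<Rightarrow> nat \<Rightarrow> complex) \<Rightarrow> (nat \<Rightarrow> nat \<Rightarrow> complex) \<Rightarrow> bool" where
  "blk_is_inverse n A B \<longleftrightarrow> (\<forall>k<n. \<forall>l<n.
      blk_mul n A B k l = (if k = l then 1 else 0) \<and> blk_mul n B A k l = (if k = l then 1 else 0))"

definition delta_form_density :: "('i \<Rightarrow> nat) \<Rightarrow> ('i mu \<Rightarrow> complex) \<Rightarrow> bool" where
  "delta_form_density d \<sigma> \<longleftrightarrow>
     supp \<sigma> \<subseteq> valid d \<and>
     (\<forall>i. blk_positive (d i) (\<lambda>k l. \<sigma> (i,k,l)) \<and>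
          (\<exists>\<tau>. blk_is_inverse (d i) (\<lambda>k l. \<sigma> (i,k,l)) \<tau> \<and> (\<Sum>k<d i. \<tau> k k) = of_nat (d i)))"

definition ip0 :: "('i \<Rightarrow> nat) \<Rightarrow> ('i mu \<Rightarrow> complex) \<Rightarrow> ('i mu \<Rightarrow> complex) \<Rightarrow> ('i mu \<Rightarrow> complex) \<Rightarrow> complex" where
  "ip0 d \<sigma> x y = omega d \<sigma> (mmul d (madj y) x)"

text \<open>F_1 = M_0 (algebraic tensor) M_0, represented by coefficient functions with respect
  to the basis E_a \<otimes> E_b of matrix-unit tensors; the elementary tensor x \<otimes> y is
  (a,b) \<mapsto> x a * y b.\<close>
definition F1 :: "('i \<Rightarrow> nat) \<Rightarrow> ('i mu \<times> 'i mu \<Rightarrow> complex) set" where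
  "F1 d = {X. supp X \<subseteq> valid d \<times> valid d \<and> finite (supp X)}"

definition tensor :: "('i mu \<Rightarrow> complex) \<Rightarrow> ('i mu \<Rightarrow> complex) \<Rightarrow> 'i mu \<times> 'i mu \<Rightarrow> complex" where
  "tensor x y = (\<lambda>(a,b). x a * y b)"

text \<open>Inner product on F_1: the sesquilinear extension of
  <x0 \<otimes> x1, y0 \<otimes> y1> = omega(y0^* x0) omega(y1^* x1).\<close>
definition ip1 :: "('i \<Rightarrow> nat) \<Rightarrow> ('i mu \<Rightarrow> complex) \<Rightarrow> ('i mu \<times> 'i mu \<Rightarrow> complex) \<Rightarrow> ('i mu \<times> 'i mu \<Rightarrow> complex) \<Rightarrow> complex" where
  "ip1 d \<sigma> X Y = (\<Sum>(a,b)\<in>supp X. \<Sum>(a',b')\<in>supp Y.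
      X (a,b) * cnj (Y (a',b')) * ip0 d \<sigma> (munit a) (munit a') * ip0 d \<sigma> (munit b) (munit b'))"

definition norm0 where "norm0 d \<sigma> x = sqrt (Re (ip0 d \<sigma> x x))"
definition norm1 where "norm1 d \<sigma> X = sqrt (Re (ip1 d \<sigma> X X))"

definition mult :: "('i \<Rightarrow> nat) \<Rightarrow> ('i mu \<times> 'i mu \<Rightarrow> complex) \<Rightarrow> 'i mu \<Rightarrow> complex" where
  "mult d X = (\<lambda>c. \<Sum>(a,b)\<in>supp X. X (a,b) * mmul d (munit a) (munit b) c)"

end

theory Submission
  imports Defs
begin

(* The adjoint mult\<^sup>* can be written down explicitly: it sends E\<^sup>i\<^sub>k\<^sub>l to
   d\<^sub>i\<^sup>-\<^sup>1 \<Sum>\<^sub>p\<^sub>,\<^sub>q cnj((\<sigma>\<^sub>i\<^sup>-\<^sup>1)\<^sub>p\<^sub>q) E\<^sup>i\<^sub>k\<^sub>p \<otimes> E\<^sup>i\<^sub>q\<^sub>l.  Adjointness is checked on matrix units, where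
   both sides reduce to \<sigma>\<^sub>i \<sigma>\<^sub>i\<^sup>-\<^sup>1 = 1, and mult mult\<^sup>* = 1 is the normalisation Tr \<sigma>\<^sub>i\<^sup>-\<^sup>1 = d\<^sub>i.
   Boundedness, with constant 1, then follows from positivity of the inner product on F_1:
   |X|\<^sup>2 - |mult X|\<^sup>2 = |X - mult\<^sup>* (mult X)|\<^sup>2 \<ge> 0.  That positivity holds because the Gram
   matrix of the matrix units is \<delta>\<^sub>i\<^sub>i\<^sub>' \<delta>\<^sub>k\<^sub>k\<^sub>' d\<^sub>i (\<sigma>\<^sub>i)\<^sub>l\<^sub>l\<^sub>', which a Cholesky factorisation
   \<sigma>\<^sub>i = U\<^sub>i\<^sup>* U\<^sub>i turns into a Gram matrix of vectors; hence so is its tensor square. *)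

lemma sum_reindex_nonzero:
  assumes "finite A" "finite N" "inj_on g N"
    and "\<And>x. x \<in> A \<Longrightarrow> x \<notin> g ` N \<Longrightarrow> h x = 0"
    and "\<And>n. n \<in> N \<Longrightarrow> g n \<notin> A \<Longrightarrow> h (g n) = 0"
  shows "sum h A = (\<Sum>n\<in>N. h (g n))"
proof -
  have "sum h A = sum h (A \<union> g ` N)"
    by (rule sum.mono_neutral_left) (use assms in auto)
  also have "\<dots> = sum h (g ` N)"
    by (rule sum.mono_neutral_right) (use assms in auto)
  also have "\<dots> = (\<Sum>n\<in>N. h (g n))"
    using sum.reindex[OF assms(3)] by simp
  finally show ?thesis .
qed

lemma sum_eq_single:
  assumes "finite A" "a \<in> A" "\<And>x. x \<in> A \<Longrightarrow> x \<noteq> a \<Longrightarrow> f x = 0"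
  shows "sum f A = f a"
  by (subst sum.remove[OF assms(1,2)]) (simp add: assms(3))

section \<open>Positive semidefinite blocks\<close>

definition blk_quad :: "nat \<Rightarrow> (nat \<Rightarrow> nat \<Rightarrow> complex) \<Rightarrow> (nat \<Rightarrow> complex) \<Rightarrow> complex" where
  "blk_quad n A v = (\<Sum>k<n. \<Sum>l<n. cnj (v k) * A k l * v l)"

lemma blk_positive_iff_quad:
  "blk_positive n A \<longleftrightarrow> (\<forall>v. Im (blk_quad n A v) = 0 \<and> 0 \<le> Re (blk_quad n A v))"
  by (simp add: blk_positive_def blk_quad_def Let_def)

lemma blk_quad_cong: "(\<And>j. j < n \<Longrightarrow> v j = w j) \<Longrightarrow> blk_quad n A v = blk_quad n A w"
  unfolding blk_quad_def by (intro sum.cong refl) auto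

lemma blk_quad_supported:
  assumes "K \<subseteq> {..<n}" and "\<And>j. j \<notin> K \<Longrightarrow> v j = 0"
  shows "blk_quad n A v = (\<Sum>k\<in>K. \<Sum>l\<in>K. cnj (v k) * A k l * v l)"
proof -
  have "(\<Sum>l<n. cnj (v k) * A k l * v l) = (\<Sum>l\<in>K. cnj (v k) * A k l * v l)" for k
    by (rule sum.mono_neutral_right) (use assms in auto)
  then have "blk_quad n A v = (\<Sum>k<n. \<Sum>l\<in>K. cnj (v k) * A k l * v l)"
    unfolding blk_quad_def by simp
  also have "\<dots> = (\<Sum>k\<in>K. \<Sum>l\<in>K. cnj (v k) * A k l * v l)"
    by (rule sum.mono_neutral_right) (use assms in auto)
  finally show ?thesis .
qed

lemma blk_quad_Suc_zero_entry: "v n = 0 \<Longrightarrow> blk_quad (Suc n) A v = blk_quad n A v"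
  unfolding blk_quad_def by simp

lemma blk_quad_Suc_zero_last:
  assumes "\<And>m. m < Suc n \<Longrightarrow> A m n = 0 \<and> A n m = 0"
  shows "blk_quad (Suc n) A v = blk_quad n A v"
  using assms by (simp add: blk_quad_def)

lemma blk_quad_add_rank_one:
  "blk_quad n (\<lambda>k l. A k l + cnj (w k) * w l) v
     = blk_quad n A v + cnj (\<Sum>k<n. w k * v k) * (\<Sum>l<n. w l * v l)"
  by (simp add: blk_quad_def algebra_simps sum.distrib sum_distrib_left sum_distrib_right)

lemma blk_positive_diag:
  assumes "blk_positive n A" "k < n"
  shows "Im (A k k) = 0" "0 \<le> Re (A k k)"
proof -
  have "blk_quad n A (\<lambda>j. if j = k then 1 else 0) = A k k"
    by (subst blk_quad_supported[of "{k}"]) (use assms(2) in auto)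
  then show "Im (A k k) = 0" "0 \<le> Re (A k k)"
    using assms(1) unfolding blk_positive_iff_quad by metis+
qed

lemma blk_positive_hermitian:
  assumes "blk_positive n A" "k < n" "l < n"
  shows "A l k = cnj (A k l)"
proof (cases "k = l")
  case True
  then show ?thesis using blk_positive_diag[OF assms(1,2)] by (simp add: complex_eq_iff)
next
  case False
  let ?v = "\<lambda>z j. if j = k then 1 else if j = l then z else 0 :: complex"
  have q: "blk_quad n A (?v z) = A k k + A k l * z + cnj z * A l k + cnj z * A l l * z" for z
    by (subst blk_quad_supported[of "{k, l}"]) (use assms False in auto)
  have "Im (blk_quad n A (?v 1)) = 0" "Im (blk_quad n A (?v \<i>)) = 0"
    using assms(1) unfolding blk_positive_iff_quad by auto
  moreover have "Im (A k k) = 0" "Im (A l l) = 0"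
    using blk_positive_diag assms by auto
  ultimately show ?thesis unfolding q by (simp add: complex_eq_iff)
qed

lemma blk_positive_zero_diag:
  assumes psd: "blk_positive n A" and "m < n" "j < n" and zero: "A j j = 0"
  shows "A m j = 0"
proof (cases "m = j")
  case False
  define c where "c = A m j"
  define a where "a = Re (A m m)"
  define \<epsilon> where "\<epsilon> = 1 / (a + 1)"
  have a: "A m m = of_real a" "0 \<le> a"
    using blk_positive_diag[OF psd \<open>m < n\<close>] unfolding a_def by (auto simp: complex_eq_iff)
  have "A j m = cnj c"
    using blk_positive_hermitian[OF psd \<open>m < n\<close> \<open>j < n\<close>] unfolding c_def .
  \<comment> \<open>Testing positivity on \<open>-\<epsilon> c e\<^sub>m + e\<^sub>j\<close>: the cross terms \<open>-2\<epsilon>|c|\<^sup>2\<close> beat \<open>\<epsilon>\<^sup>2 a |c|\<^sup>2\<close>.\<close>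
  let ?v = "\<lambda>i. if i = m then - of_real \<epsilon> * c else if i = j then 1 else 0"
  have cc: "cnj c * c = of_real ((cmod c)\<^sup>2)"
    using complex_norm_square[of c] by (simp add: mult.commute)
  have "blk_quad n A ?v = of_real (\<epsilon>\<^sup>2 * a) * (cnj c * c) - 2 * of_real \<epsilon> * (cnj c * c)"
    by (subst blk_quad_supported[of "{m, j}"])
      (use assms False a \<open>A j m = cnj c\<close> in \<open>auto simp: c_def algebra_simps power2_eq_square\<close>)
  also have "\<dots> = of_real (\<epsilon>\<^sup>2 * a * (cmod c)\<^sup>2 - 2 * \<epsilon> * (cmod c)\<^sup>2)"
    unfolding cc by simp
  finally have "blk_quad n A ?v = of_real (\<epsilon> * (\<epsilon> * a - 2) * (cmod c)\<^sup>2)"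
    by (simp add: algebra_simps power2_eq_square)
  then have "0 \<le> \<epsilon> * (\<epsilon> * a - 2) * (cmod c)\<^sup>2"
    using psd unfolding blk_positive_iff_quad by (metis Re_complex_of_real)
  moreover have "\<epsilon> > 0" "\<epsilon> * a < 1"
    using a(2) by (auto simp: \<epsilon>_def field_simps)
  ultimately have "\<epsilon> * (\<epsilon> * a - 2) < 0" "0 \<le> \<epsilon> * (\<epsilon> * a - 2) * (cmod c)\<^sup>2"
    by (simp_all add: mult_pos_neg)
  then have "(cmod c)\<^sup>2 \<le> 0"
    by (meson mult_neg_pos not_le)
  then show ?thesis unfolding c_def by simp
qed (use zero in simp)

lemma blk_positive_Suc_zero_diag:
  assumes psd: "blk_positive (Suc n) A" and zero: "A n n = 0"
  shows "\<And>m. m < Suc n \<Longrightarrow> A m n = 0 \<and> A n m = 0" and "blk_positive n A"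
proof -
  show "A m n = 0 \<and> A n m = 0" if "m < Suc n" for m
    using blk_positive_zero_diag[OF psd that _ zero] blk_positive_hermitian[OF psd _ that] by auto
  show "blk_positive n A"
    unfolding blk_positive_iff_quad
  proof
    fix v
    have "blk_quad n A v = blk_quad n A (v(n := 0))"
      by (rule blk_quad_cong) simp
    also have "\<dots> = blk_quad (Suc n) A (v(n := 0))"
      by (simp add: blk_quad_Suc_zero_entry)
    finally show "Im (blk_quad n A v) = 0 \<and> 0 \<le> Re (blk_quad n A v)"
      using psd unfolding blk_positive_iff_quad by simp
  qed
qed

lemma blk_positive_split_last:
  assumes psd: "blk_positive (Suc n) A"
  obtains w where "\<And>m. m < Suc n \<Longrightarrow> A m n = cnj (w m) * w n \<and> A n m = cnj (w n) * w m"
    and "blk_positive n (\<lambda>k l. A k l - cnj (w k) * w l)"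
proof (cases "A n n = 0")
  case True
  show ?thesis
  proof (rule that[of "\<lambda>_. 0"])
    show "A m n = cnj 0 * 0 \<and> A n m = cnj 0 * 0" if "m < Suc n" for m
      using blk_positive_Suc_zero_diag(1)[OF psd True that] by simp
    show "blk_positive n (\<lambda>k l. A k l - cnj 0 * 0)"
      using blk_positive_Suc_zero_diag(2)[OF psd True] by simp
  qed
next
  case False
  define s where "s = sqrt (Re (A n n))"
  have "Im (A n n) = 0" "0 \<le> Re (A n n)" using blk_positive_diag[OF psd, of n] by auto
  then have s: "0 < s" "A n n = of_real (s * s)"
    using False by (auto simp: s_def complex_eq_iff)
  \<comment> \<open>One Cholesky elimination step: the Schur complement \<open>B\<close> is positive because \<open>B\<close> and \<open>A\<close>
    have the same quadratic form on vectors orthogonal to \<open>w\<close>.\<close>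
  define w where "w l = A n l / of_real s" for l
  have wn: "w n = of_real s" using s by (simp add: w_def)
  have last: "A m n = cnj (w m) * w n \<and> A n m = cnj (w n) * w m" if "m < Suc n" for m
    using blk_positive_hermitian[OF psd, of n m] that s wn by (simp add: w_def)
  define B where "B k l = A k l - cnj (w k) * w l" for k l
  have "blk_positive n B"
    unfolding blk_positive_iff_quad
  proof
    fix v
    define v' where "v' = v(n := - (\<Sum>l<n. w l * v l) / w n)"
    have orth: "(\<Sum>l<Suc n. w l * v' l) = 0"
      using s wn by (simp add: v'_def)
    have "blk_quad (Suc n) A v' = blk_quad (Suc n) B v'"
      using blk_quad_add_rank_one[of "Suc n" B w v'] orth by (simp add: B_def)
    also have "\<dots> = blk_quad n B v'"
      by (rule blk_quad_Suc_zero_last) (use last in \<open>simp add: B_def\<close>)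
    also have "\<dots> = blk_quad n B v"
      by (rule blk_quad_cong) (simp add: v'_def)
    finally show "Im (blk_quad n B v) = 0 \<and> 0 \<le> Re (blk_quad n B v)"
      using psd unfolding blk_positive_iff_quad by metis
  qed
  then show ?thesis using that[of w] last unfolding B_def by blast
qed

lemma blk_positive_factorization:
  "blk_positive n A \<Longrightarrow> \<exists>u. \<forall>m<n. \<forall>p<n. A m p = (\<Sum>r<n. cnj (u r m) * u r p)"
proof (induction n arbitrary: A)
  case 0
  then show ?case by simp
next
  case (Suc n)
  obtain w where last: "\<And>m. m < Suc n \<Longrightarrow> A m n = cnj (w m) * w n \<and> A n m = cnj (w n) * w m"
    and rest: "blk_positive n (\<lambda>k l. A k l - cnj (w k) * w l)"
    using blk_positive_split_last[OF Suc.prems] by blast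
  obtain u where u: "\<forall>m<n. \<forall>p<n. A m p - cnj (w m) * w p = (\<Sum>r<n. cnj (u r m) * u r p)"
    using Suc.IH[OF rest] by blast
  define u' where "u' r l = (if r < n then if l < n then u r l else 0 else w l)" for r l
  have "A m p = (\<Sum>r<Suc n. cnj (u' r m) * u' r p)" if "m < Suc n" "p < Suc n" for m p
  proof (cases "m < n \<and> p < n")
    case True
    then show ?thesis using u by (simp add: u'_def algebra_simps)
  next
    case False
    then have "m = n \<or> p = n" using that by auto
    then show ?thesis using last that False by (auto simp: u'_def)
  qed
  then show ?case by blast
qed

section \<open>Sesquilinear forms with a Gram kernel\<close>

definition kernel_form ::
    "'p set \<Rightarrow> ('p \<Rightarrow> 'p \<Rightarrow> complex) \<Rightarrow> ('p \<Rightarrow> complex) \<Rightarrow> ('p \<Rightarrow> complex) \<Rightarrow> complex" where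
  "kernel_form S K X Y = (\<Sum>p\<in>S. \<Sum>q\<in>S. X p * cnj (Y q) * K p q)"

lemma kernel_form_diff_self:
  "kernel_form S K (\<lambda>p. X p - Y p) (\<lambda>p. X p - Y p)
     = kernel_form S K X X - kernel_form S K X Y - kernel_form S K Y X + kernel_form S K Y Y"
proof -
  have "(X p - Y p) * cnj (X q - Y q) * K p q = X p * cnj (X q) * K p q - X p * cnj (Y q) * K p q
      - Y p * cnj (X q) * K p q + Y p * cnj (Y q) * K p q" for p q
    by (simp add: algebra_simps)
  then show ?thesis
    unfolding kernel_form_def by (simp only: sum.distrib sum_subtractf)
qed

lemma kernel_form_swap:
  assumes "\<And>p q. p \<in> S \<Longrightarrow> q \<in> S \<Longrightarrow> K q p = cnj (K p q)"
  shows "kernel_form S K Y X = cnj (kernel_form S K X Y)"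
proof -
  have "cnj (kernel_form S K X Y) = (\<Sum>p\<in>S. \<Sum>q\<in>S. Y q * cnj (X p) * K q p)"
    unfolding kernel_form_def cnj_sum by (intro sum.cong refl) (simp add: assms[symmetric])
  also have "\<dots> = kernel_form S K Y X"
    unfolding kernel_form_def by (rule sum.swap)
  finally show ?thesis by simp
qed

lemma kernel_form_gram_nonneg:
  assumes "\<And>p q. p \<in> S \<Longrightarrow> q \<in> S \<Longrightarrow> K p q = (\<Sum>\<rho>\<in>R. cnj (V \<rho> p) * V \<rho> q)"
  shows "0 \<le> Re (kernel_form S K X X)"
proof -
  define c where "c \<rho> = (\<Sum>p\<in>S. X p * cnj (V \<rho> p))" for \<rho>
  have "kernel_form S K X X = (\<Sum>p\<in>S. \<Sum>q\<in>S. \<Sum>\<rho>\<in>R. X p * cnj (V \<rho> p) * cnj (X q * cnj (V \<rho> q)))"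
    unfolding kernel_form_def by (intro sum.cong refl) (simp add: assms sum_distrib_left algebra_simps)
  also have "\<dots> = (\<Sum>\<rho>\<in>R. c \<rho> * cnj (c \<rho>))"
    unfolding c_def cnj_sum sum_product by (simp add: sum.swap[of _ R])
  finally show ?thesis
    by (simp add: Re_sum sum_nonneg complex_mult_cnj)
qed

definition tensor_kernel :: "('a \<Rightarrow> 'a \<Rightarrow> complex) \<Rightarrow> 'a \<times> 'a \<Rightarrow> 'a \<times> 'a \<Rightarrow> complex" where
  "tensor_kernel G p q = G (fst p) (fst q) * G (snd p) (snd q)"

lemma tensor_kernel_gram:
  assumes "\<And>a b. a \<in> A \<Longrightarrow> b \<in> A \<Longrightarrow> G a b = (\<Sum>\<rho>\<in>R. cnj (V \<rho> a) * V \<rho> b)"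
    and "p \<in> A \<times> A" "q \<in> A \<times> A"
  shows "tensor_kernel G p q
    = (\<Sum>\<rho>\<in>R \<times> R. cnj (V (fst \<rho>) (fst p) * V (snd \<rho>) (snd p)) * (V (fst \<rho>) (fst q) * V (snd \<rho>) (snd q)))"
proof -
  have "tensor_kernel G p q
      = (\<Sum>\<rho>\<in>R. cnj (V \<rho> (fst p)) * V \<rho> (fst q)) * (\<Sum>\<rho>\<in>R. cnj (V \<rho> (snd p)) * V \<rho> (snd q))"
    using assms by (auto simp: tensor_kernel_def)
  also have "\<dots> = (\<Sum>\<rho>\<in>R \<times> R. (cnj (V (fst \<rho>) (fst p)) * V (fst \<rho>) (fst q))
      * (cnj (V (snd \<rho>) (snd p)) * V (snd \<rho>) (snd q)))"
    unfolding sum_product sum.cartesian_product by (simp add: case_prod_beta)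
  also have "\<dots> = (\<Sum>\<rho>\<in>R \<times> R. cnj (V (fst \<rho>) (fst p) * V (snd \<rho>) (snd p))
      * (V (fst \<rho>) (fst q) * V (snd \<rho>) (snd q)))"
    by (intro sum.cong refl) (simp only: complex_cnj_mult mult_ac)
  finally show ?thesis .
qed

lemma tensor_kernel_swap:
  assumes "\<And>a b. a \<in> A \<Longrightarrow> b \<in> A \<Longrightarrow> G b a = cnj (G a b)"
    and "p \<in> A \<times> A" "q \<in> A \<times> A"
  shows "tensor_kernel G q p = cnj (tensor_kernel G p q)"
proof -
  have "G (fst q) (fst p) = cnj (G (fst p) (fst q))"
    by (rule assms(1)) (use assms(2,3) in auto)
  moreover have "G (snd q) (snd p) = cnj (G (snd p) (snd q))"
    by (rule assms(1)) (use assms(2,3) in auto)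
  ultimately show ?thesis by (simp add: tensor_kernel_def)
qed

section \<open>Matrix units and the inner product on M_0\<close>

lemma supp_munit: "supp (munit a) = {a}"
  unfolding supp_def munit_def by auto

lemma mmul_munit:
  "mmul d (munit (i, k, m)) (munit (j, m', l))
     = (if j = i \<and> m' = m \<and> m < d i then munit (i, k, l) else (\<lambda>_. 0))"
proof (rule ext, clarify)
  fix i0 k0 l0
  show "mmul d (munit (i, k, m)) (munit (j, m', l)) (i0, k0, l0)
     = (if j = i \<and> m' = m \<and> m < d i then munit (i, k, l) else (\<lambda>_. 0)) (i0, k0, l0)"
  proof (cases "i0 = i \<and> k0 = k \<and> m < d i")
    case True
    then have "mmul d (munit (i, k, m)) (munit (j, m', l)) (i0, k0, l0)
        = (\<Sum>n<d i. munit (i, k, m) (i, k, n) * munit (j, m', l) (i, n, l0))"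
      by (simp add: mmul_def)
    also have "\<dots> = munit (j, m', l) (i, m, l0)"
      by (subst sum_eq_single[where a = m]) (use True in \<open>auto simp: munit_def\<close>)
    finally show ?thesis using True by (auto simp: munit_def)
  next
    case False
    then show ?thesis by (auto simp: mmul_def munit_def)
  qed
qed

text \<open>\<open>trM\<close> sums over the blocks on which its argument is nonzero; summing instead over a fixed
  finite set of blocks makes the inner product visibly linear in its first argument.\<close>

definition ip0_blocks :: "('i \<Rightarrow> nat) \<Rightarrow> ('i mu \<Rightarrow> complex) \<Rightarrow> 'i set
    \<Rightarrow> ('i mu \<Rightarrow> complex) \<Rightarrow> ('i mu \<Rightarrow> complex) \<Rightarrow> complex" where
  "ip0_blocks d \<sigma> B x y = (\<Sum>i\<in>B. of_nat (d i) *
     (\<Sum>k<d i. \<Sum>n<d i. (\<Sum>m<d i. cnj (y (i, m, k)) * x (i, m, n)) * \<sigma> (i, n, k)))"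

lemma ip0_eq_blocks:
  assumes "finite B" "fst ` supp x \<subseteq> B"
  shows "ip0 d \<sigma> x y = ip0_blocks d \<sigma> B x y"
proof -
  define z where "z = mmul d (mmul d (madj y) x) \<sigma>"
  have z: "z (i, k, l) = (\<Sum>n<d i. (\<Sum>m<d i. cnj (y (i, m, k)) * x (i, m, n)) * \<sigma> (i, n, l))" for i k l
    unfolding z_def by (simp add: mmul_def madj_def)
  have "fst ` supp z \<subseteq> B"
  proof
    fix i assume "i \<in> fst ` supp z"
    then obtain k l where "z (i, k, l) \<noteq> 0" unfolding supp_def by auto
    then obtain n m where "x (i, m, n) \<noteq> 0"
      unfolding z by (metis (no_types, lifting) mult_eq_0_iff sum.neutral)
    then show "i \<in> B" using assms(2) unfolding supp_def by force
  qed
  moreover have "z (i, k, k) = 0" if "i \<notin> fst ` supp z" for i k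
    using that unfolding supp_def by force
  ultimately have "trM d z = (\<Sum>i\<in>B. of_nat (d i) * (\<Sum>k<d i. z (i, k, k)))"
    unfolding trM_def by (intro sum.mono_neutral_left) (use assms(1) in auto)
  then show ?thesis unfolding ip0_def omega_def ip0_blocks_def z_def[symmetric] z .
qed

lemma ip0_blocks_sum_left:
  "ip0_blocks d \<sigma> B (\<lambda>c. \<Sum>p\<in>S. X p * f p c) y = (\<Sum>p\<in>S. X p * ip0_blocks d \<sigma> B (f p) y)"
proof (induction S rule: infinite_finite_induct)
  case (insert p S)
  then show ?case
    by (simp add: ip0_blocks_def algebra_simps sum.distrib sum_distrib_left)
qed (simp_all add: ip0_blocks_def)

lemma ip0_munit_left:
  assumes "k < d i" "l < d i"
  shows "ip0 d \<sigma> (munit (i, k, l)) y = of_nat (d i) * (\<Sum>n<d i. cnj (y (i, k, n)) * \<sigma> (i, l, n))"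
proof -
  have "ip0 d \<sigma> (munit (i, k, l)) y = ip0_blocks d \<sigma> {i} (munit (i, k, l)) y"
    by (rule ip0_eq_blocks) (auto simp: supp_munit)
  also have "\<dots> = of_nat (d i) * (\<Sum>n<d i. cnj (y (i, k, n)) * \<sigma> (i, l, n))"
  proof -
    have "(\<Sum>m<d i. cnj (y (i, m, n')) * munit (i, k, l) (i, m, n))
        = cnj (y (i, k, n')) * munit (i, k, l) (i, k, n)" for n n'
      by (rule sum_eq_single) (use assms in \<open>auto simp: munit_def\<close>)
    moreover have "(\<Sum>n<d i. cnj (y (i, k, n')) * munit (i, k, l) (i, k, n) * \<sigma> (i, n, n'))
        = cnj (y (i, k, n')) * \<sigma> (i, l, n')" for n'
      by (subst sum_eq_single[where a = l]) (use assms in \<open>auto simp: munit_def\<close>)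
    ultimately show ?thesis
      by (simp add: ip0_blocks_def)
  qed
  finally show ?thesis .
qed

definition munit_gram :: "('i \<Rightarrow> nat) \<Rightarrow> ('i mu \<Rightarrow> complex) \<Rightarrow> 'i mu \<Rightarrow> 'i mu \<Rightarrow> complex" where
  "munit_gram d \<sigma> a b = ip0 d \<sigma> (munit a) (munit b)"

lemma munit_gram_eq:
  assumes "k < d i" "l < d i" "l' < d i'"
  shows "munit_gram d \<sigma> (i, k, l) (i', k', l')
    = (if i' = i \<and> k' = k then of_nat (d i) * \<sigma> (i, l, l') else 0)"
proof -
  have "(\<Sum>n<d i. cnj (munit (i', k', l') (i, k, n)) * \<sigma> (i, l, n))
      = (if i' = i \<and> k' = k then \<sigma> (i, l, l') else 0)"
  proof (cases "i' = i \<and> k' = k")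
    case True
    then show ?thesis
      by (subst sum_eq_single[where a = l']) (use assms in \<open>auto simp: munit_def\<close>)
  qed (auto simp: munit_def)
  then show ?thesis
    unfolding munit_gram_def ip0_munit_left[of k d i l \<sigma>, OF assms(1,2)] by simp
qed

lemma munit_gram_hermitian:
  assumes "delta_form_density d \<sigma>" "a \<in> valid d" "b \<in> valid d"
  shows "munit_gram d \<sigma> b a = cnj (munit_gram d \<sigma> a b)"
proof -
  obtain i k l i' k' l' where ab: "a = (i, k, l)" "b = (i', k', l')"
    by (cases a, cases b) auto
  have "blk_positive (d i) (\<lambda>k l. \<sigma> (i, k, l))"
    using assms(1) unfolding delta_form_density_def by blast
  then show ?thesis
    using assms(2,3) blk_positive_hermitian[of "d i" "\<lambda>k l. \<sigma> (i, k, l)" l l']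
    by (auto simp: ab valid_def munit_gram_eq)
qed

definition munit_gram_factor :: "('i \<Rightarrow> nat) \<Rightarrow> ('i \<Rightarrow> nat \<Rightarrow> nat \<Rightarrow> complex) \<Rightarrow> 'i mu \<Rightarrow> 'i mu \<Rightarrow> complex" where
  "munit_gram_factor d U \<rho> a = (if fst a = fst \<rho> \<and> fst (snd a) = fst (snd \<rho>)
     then of_real (sqrt (real (d (fst a)))) * U (fst a) (snd (snd \<rho>)) (snd (snd a)) else 0)"

lemma munit_gram_eq_factor_sum:
  assumes U: "\<And>i m p. m < d i \<Longrightarrow> p < d i \<Longrightarrow> \<sigma> (i, m, p) = (\<Sum>r<d i. cnj (U i r m) * U i r p)"
    and "finite B" "a \<in> valid d" "b \<in> valid d" "fst a \<in> B"
  shows "munit_gram d \<sigma> a b = (\<Sum>\<rho>\<in>(SIGMA i:B. {..<d i} \<times> {..<d i}).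
     cnj (munit_gram_factor d U \<rho> a) * munit_gram_factor d U \<rho> b)"
proof -
  obtain i k l i' k' l' where ab: "a = (i, k, l)" "b = (i', k', l')"
    by (cases a, cases b) auto
  have v: "k < d i" "l < d i" "k' < d i'" "l' < d i'" "i \<in> B"
    using assms(3-5) by (auto simp: ab valid_def)
  define g where "g \<rho> = cnj (munit_gram_factor d U \<rho> a) * munit_gram_factor d U \<rho> b" for \<rho>
  have "sum g (SIGMA i:B. {..<d i} \<times> {..<d i}) = (\<Sum>j\<in>B. \<Sum>x\<in>{..<d j} \<times> {..<d j}. g (j, x))"
    using assms(2) sum.Sigma[of B "\<lambda>j. {..<d j} \<times> {..<d j}" "\<lambda>j x. g (j, x)"] by simp
  also have "\<dots> = (\<Sum>j\<in>B. \<Sum>k0<d j. \<Sum>r<d j. g (j, k0, r))"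
    by (simp add: sum.cartesian_product case_prod_beta)
  also have "\<dots> = (\<Sum>r<d i. g (i, k, r))"
  proof -
    have "g (j, k0, r) = 0" if "j \<noteq> i \<or> k0 \<noteq> k" for j k0 r
      using that by (auto simp: g_def munit_gram_factor_def ab)
    then show ?thesis
      using assms(2) v by (simp add: sum_eq_single[where a = i] sum_eq_single[where a = k])
  qed
  also have "\<dots> = (if i' = i \<and> k' = k then of_nat (d i) * \<sigma> (i, l, l') else 0)"
    using v U[of l i l'] by (auto simp: g_def munit_gram_factor_def ab sum_distrib_left algebra_simps
        simp flip: of_real_mult)
  also have "\<dots> = munit_gram d \<sigma> a b"
    using v by (simp add: ab munit_gram_eq)
  finally show ?thesis by (simp add: g_def)
qed

lemma munit_gram_factorization:
  assumes "delta_form_density d \<sigma>" "finite B"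
  obtains R and V :: "'i mu \<Rightarrow> 'i mu \<Rightarrow> complex" where "finite R"
    and "\<And>a b. a \<in> valid d \<Longrightarrow> b \<in> valid d \<Longrightarrow> fst a \<in> B
           \<Longrightarrow> munit_gram d \<sigma> a b = (\<Sum>\<rho>\<in>R. cnj (V \<rho> a) * V \<rho> b)"
proof -
  have "\<forall>i. \<exists>u. \<forall>m<d i. \<forall>p<d i. \<sigma> (i, m, p) = (\<Sum>r<d i. cnj (u r m) * u r p)"
    using assms(1) blk_positive_factorization unfolding delta_form_density_def by blast
  then obtain U where U: "\<And>i m p. m < d i \<Longrightarrow> p < d i \<Longrightarrow> \<sigma> (i, m, p) = (\<Sum>r<d i. cnj (U i r m) * U i r p)"
    by metis
  show ?thesis
  proof (rule that[of "SIGMA i:B. {..<d i} \<times> {..<d i}" "munit_gram_factor d U"])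
    show "finite (SIGMA i:B. {..<d i} \<times> {..<d i})"
      using assms(2) by simp
    show "munit_gram d \<sigma> a b = (\<Sum>\<rho>\<in>(SIGMA i:B. {..<d i} \<times> {..<d i}).
        cnj (munit_gram_factor d U \<rho> a) * munit_gram_factor d U \<rho> b)"
      if "a \<in> valid d" "b \<in> valid d" "fst a \<in> B" for a b
      by (rule munit_gram_eq_factor_sum[OF U assms(2) that])
  qed
qed

section \<open>Positivity of the inner product on F_1\<close>

lemma ip1_eq_kernel_form:
  assumes "finite S" "supp X \<subseteq> S" "supp Y \<subseteq> S"
  shows "ip1 d \<sigma> X Y = kernel_form S (tensor_kernel (munit_gram d \<sigma>)) X Y"
proof -
  let ?t = "\<lambda>p q. X p * cnj (Y q) * tensor_kernel (munit_gram d \<sigma>) p q"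
  have "ip1 d \<sigma> X Y = (\<Sum>p\<in>supp X. \<Sum>q\<in>supp Y. ?t p q)"
    by (simp add: ip1_def tensor_kernel_def munit_gram_def case_prod_beta mult.assoc)
  also have "\<dots> = (\<Sum>p\<in>supp X. \<Sum>q\<in>S. ?t p q)"
    by (intro sum.cong refl sum.mono_neutral_left) (use assms in \<open>auto simp: supp_def\<close>)
  also have "\<dots> = (\<Sum>p\<in>S. \<Sum>q\<in>S. ?t p q)"
    by (intro sum.mono_neutral_left) (use assms in \<open>auto simp: supp_def\<close>)
  finally show ?thesis
    unfolding kernel_form_def .
qed

lemma F1_diff:
  assumes "X \<in> F1 d" "Y \<in> F1 d"
  shows "(\<lambda>p. X p - Y p) \<in> F1 d"
proof -
  have "supp (\<lambda>p. X p - Y p) \<subseteq> supp X \<union> supp Y"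
    by (auto simp: supp_def)
  then show ?thesis
    using assms unfolding F1_def by (auto intro: finite_subset)
qed

lemma ip1_nonneg:
  fixes d :: "'i \<Rightarrow> nat"
  assumes "delta_form_density d \<sigma>" "X \<in> F1 d"
  shows "0 \<le> Re (ip1 d \<sigma> X X)"
proof -
  define S where "S = supp X"
  have S: "finite S" "S \<subseteq> valid d \<times> valid d"
    using assms(2) by (auto simp: S_def F1_def)
  define B where "B = fst ` fst ` S \<union> fst ` snd ` S"
  define A where "A = {a \<in> valid d. fst a \<in> B}"
  have "finite B"
    using S(1) by (simp add: B_def)
  obtain R and V :: "'i mu \<Rightarrow> 'i mu \<Rightarrow> complex" where "finite R"
    and gram: "\<And>a b. a \<in> valid d \<Longrightarrow> b \<in> valid d \<Longrightarrow> fst a \<in> B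
      \<Longrightarrow> munit_gram d \<sigma> a b = (\<Sum>\<rho>\<in>R. cnj (V \<rho> a) * V \<rho> b)"
    using munit_gram_factorization[OF assms(1) \<open>finite B\<close>] by blast
  have "S \<subseteq> A \<times> A"
    using S(2) by (force simp: A_def B_def)
  have "0 \<le> Re (kernel_form S (tensor_kernel (munit_gram d \<sigma>)) X X)"
  proof (rule kernel_form_gram_nonneg[where R = "R \<times> R"
        and V = "\<lambda>\<rho> p. V (fst \<rho>) (fst p) * V (snd \<rho>) (snd p)"])
    fix p q assume "p \<in> S" "q \<in> S"
    with \<open>S \<subseteq> A \<times> A\<close> show "tensor_kernel (munit_gram d \<sigma>) p q = (\<Sum>\<rho>\<in>R \<times> R.
        cnj (V (fst \<rho>) (fst p) * V (snd \<rho>) (snd p)) * (V (fst \<rho>) (fst q) * V (snd \<rho>) (snd q)))"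
      by (intro tensor_kernel_gram[where A = A]) (auto simp: A_def gram)
  qed
  then show ?thesis
    using ip1_eq_kernel_form[OF S(1)] by (simp add: S_def)
qed

lemma ip1_swap:
  assumes "delta_form_density d \<sigma>" "X \<in> F1 d" "Y \<in> F1 d"
  shows "ip1 d \<sigma> Y X = cnj (ip1 d \<sigma> X Y)"
proof -
  define S where "S = supp X \<union> supp Y"
  have S: "finite S" "S \<subseteq> valid d \<times> valid d"
    using assms(2,3) by (auto simp: S_def F1_def)
  have "kernel_form S (tensor_kernel (munit_gram d \<sigma>)) Y X
      = cnj (kernel_form S (tensor_kernel (munit_gram d \<sigma>)) X Y)"
    using S(2) by (intro kernel_form_swap tensor_kernel_swap[where A = "valid d"]
        munit_gram_hermitian[OF assms(1)]) auto
  then show ?thesis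
    using ip1_eq_kernel_form[OF S(1)] by (simp add: S_def)
qed

lemma ip1_diff_self:
  assumes "X \<in> F1 d" "Y \<in> F1 d"
  shows "ip1 d \<sigma> (\<lambda>p. X p - Y p) (\<lambda>p. X p - Y p)
    = ip1 d \<sigma> X X - ip1 d \<sigma> X Y - ip1 d \<sigma> Y X + ip1 d \<sigma> Y Y"
proof -
  define S where "S = supp X \<union> supp Y"
  have "finite S" "supp (\<lambda>p. X p - Y p) \<subseteq> S"
    using assms by (auto simp: S_def F1_def supp_def)
  then show ?thesis
    using ip1_eq_kernel_form[OF \<open>finite S\<close>] kernel_form_diff_self by (simp add: S_def)
qed

section \<open>The multiplication map and its adjoint\<close>

lemma mult_apply: "mult d X c = (\<Sum>p\<in>supp X. X p * mmul d (munit (fst p)) (munit (snd p)) c)"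
  unfolding mult_def by (simp add: case_prod_beta)

lemma mmul_munit_nonzero:
  assumes "mmul d (munit (i, k, m)) (munit (j, m', l)) c \<noteq> 0"
  shows "c = (i, k, l) \<and> j = i \<and> m' = m \<and> m < d i"
  using assms unfolding mmul_munit by (auto simp: munit_def split: if_splits)

lemma supp_mult:
  "supp (mult d X) \<subseteq> {(i, k, l) |i k m m' l. ((i, k, m), (i, m', l)) \<in> supp X}"
proof
  fix c assume "c \<in> supp (mult d X)"
  then have "mult d X c \<noteq> 0"
    by (simp add: supp_def)
  then obtain p where p: "p \<in> supp X" "X p * mmul d (munit (fst p)) (munit (snd p)) c \<noteq> 0"
    unfolding mult_apply by (meson sum.not_neutral_contains_not_neutral)
  obtain i k m j m' l where "p = ((i, k, m), (j, m', l))"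
    by (metis prod.collapse)
  with p show "c \<in> {(i, k, l) |i k m m' l. ((i, k, m), (i, m', l)) \<in> supp X}"
    using mmul_munit_nonzero[of d i k m j m' l c] by auto
qed

lemma mult_in_M0:
  assumes "X \<in> F1 d"
  shows "mult d X \<in> M0 d"
proof -
  let ?f = "\<lambda>((i, k, m), (j, m', l)). (i, k, l)"
  have "supp (mult d X) \<subseteq> ?f ` supp X"
    using supp_mult by force
  moreover have "supp (mult d X) \<subseteq> valid d"
    using supp_mult[of d X] assms by (force simp: F1_def valid_def)
  ultimately show ?thesis
    using assms by (auto simp: M0_def F1_def intro: finite_subset)
qed

lemma ip0_zero_left: "ip0 d \<sigma> (\<lambda>_. 0) y = 0"
  using ip0_eq_blocks[of "{}" "\<lambda>_. 0"] by (simp add: supp_def ip0_blocks_def)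

lemma ip0_mult:
  assumes "finite (supp X)"
  shows "ip0 d \<sigma> (mult d X) y = (\<Sum>p\<in>supp X. X p * ip0 d \<sigma> (mmul d (munit (fst p)) (munit (snd p))) y)"
proof -
  define B where "B = fst ` fst ` supp X"
  have B: "finite B" "fst ` supp (mult d X) \<subseteq> B"
    using assms supp_mult[of d X] by (force simp: B_def)+
  have blocks: "fst ` supp (mmul d (munit (fst p)) (munit (snd p))) \<subseteq> B" if "p \<in> supp X" for p
  proof -
    obtain i k m j m' l where "p = ((i, k, m), (j, m', l))"
      by (metis prod.collapse)
    then show ?thesis
      using that mmul_munit_nonzero[of d i k m j m' l] by (force simp: B_def supp_def)
  qed
  have "ip0 d \<sigma> (mult d X) y = ip0_blocks d \<sigma> B (mult d X) y"
    by (rule ip0_eq_blocks[OF B])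
  also have "\<dots> = (\<Sum>p\<in>supp X. X p * ip0_blocks d \<sigma> B (mmul d (munit (fst p)) (munit (snd p))) y)"
    unfolding mult_apply by (rule ip0_blocks_sum_left)
  also have "\<dots> = (\<Sum>p\<in>supp X. X p * ip0 d \<sigma> (mmul d (munit (fst p)) (munit (snd p))) y)"
    using ip0_eq_blocks[OF B(1) blocks] by simp
  finally show ?thesis .
qed

lemma supp_tensor_munit: "supp (tensor (munit a) (munit b)) = {(a, b)}"
  by (auto simp: supp_def tensor_def munit_def split: if_splits)

lemma ip1_tensor_munit_left:
  "ip1 d \<sigma> (tensor (munit a) (munit b)) Y
     = (\<Sum>q\<in>supp Y. cnj (Y q) * tensor_kernel (munit_gram d \<sigma>) (a, b) q)"
  unfolding ip1_def supp_tensor_munit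
  by (simp add: tensor_def munit_def tensor_kernel_def munit_gram_def case_prod_beta mult.assoc)

lemma ip1_eq_sum_left:
  "ip1 d \<sigma> X Y = (\<Sum>p\<in>supp X. X p * ip1 d \<sigma> (tensor (munit (fst p)) (munit (snd p))) Y)"
  unfolding ip1_tensor_munit_left
  by (simp add: ip1_def tensor_kernel_def munit_gram_def case_prod_beta sum_distrib_left mult.assoc)

definition sigma_inv :: "('i \<Rightarrow> nat) \<Rightarrow> ('i mu \<Rightarrow> complex) \<Rightarrow> 'i \<Rightarrow> nat \<Rightarrow> nat \<Rightarrow> complex" where
  "sigma_inv d \<sigma> i =
     (SOME \<tau>. blk_is_inverse (d i) (\<lambda>k l. \<sigma> (i, k, l)) \<tau> \<and> (\<Sum>k<d i. \<tau> k k) = of_nat (d i))"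

lemma sigma_inv:
  assumes "delta_form_density d \<sigma>"
  shows "blk_is_inverse (d i) (\<lambda>k l. \<sigma> (i, k, l)) (sigma_inv d \<sigma> i)"
    and "(\<Sum>k<d i. sigma_inv d \<sigma> i k k) = of_nat (d i)"
proof -
  have "\<exists>\<tau>. blk_is_inverse (d i) (\<lambda>k l. \<sigma> (i, k, l)) \<tau> \<and> (\<Sum>k<d i. \<tau> k k) = of_nat (d i)"
    using assms unfolding delta_form_density_def by blast
  then have "blk_is_inverse (d i) (\<lambda>k l. \<sigma> (i, k, l)) (sigma_inv d \<sigma> i)
      \<and> (\<Sum>k<d i. sigma_inv d \<sigma> i k k) = of_nat (d i)"
    unfolding sigma_inv_def by (rule someI_ex)
  then show "blk_is_inverse (d i) (\<lambda>k l. \<sigma> (i, k, l)) (sigma_inv d \<sigma> i)"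
    and "(\<Sum>k<d i. sigma_inv d \<sigma> i k k) = of_nat (d i)"
    by auto
qed

lemma sigma_mult_sigma_inv:
  assumes "delta_form_density d \<sigma>" "m < d i" "m' < d i"
  shows "(\<Sum>r<d i. \<sigma> (i, m, r) * sigma_inv d \<sigma> i r m') = (if m = m' then 1 else 0)"
  using sigma_inv(1)[OF assms(1), of i] assms(2,3) unfolding blk_is_inverse_def blk_mul_def by auto

definition mult_adj ::
    "('i \<Rightarrow> nat) \<Rightarrow> ('i mu \<Rightarrow> complex) \<Rightarrow> ('i mu \<Rightarrow> complex) \<Rightarrow> 'i mu \<times> 'i mu \<Rightarrow> complex" where
  "mult_adj d \<sigma> y = (\<lambda>((i, k, p), (j, q, l)).
     if i = j \<and> k < d i \<and> p < d i \<and> q < d i \<and> l < d i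
     then cnj (sigma_inv d \<sigma> i p q) * y (i, k, l) / of_nat (d i) else 0)"

lemma mult_adj_apply:
  "mult_adj d \<sigma> y ((i, k, p), (j, q, l)) =
     (if i = j \<and> k < d i \<and> p < d i \<and> q < d i \<and> l < d i
      then cnj (sigma_inv d \<sigma> i p q) * y (i, k, l) / of_nat (d i) else 0)"
  by (simp add: mult_adj_def)

lemma mult_adj_nonzero:
  assumes "mult_adj d \<sigma> y ((i, k, p), (j, q, l)) \<noteq> 0"
  shows "j = i \<and> k < d i \<and> p < d i \<and> q < d i \<and> l < d i \<and> (i, k, l) \<in> supp y"
  using assms by (auto simp: mult_adj_apply supp_def split: if_splits)

lemma mult_adj_in_F1:
  assumes "y \<in> M0 d"
  shows "mult_adj d \<sigma> y \<in> F1 d"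
proof -
  let ?g = "\<lambda>(i, k, l). (\<lambda>(p, q). ((i, k, p), (i, q, l))) ` ({..<d i} \<times> {..<d i})"
  have "supp (mult_adj d \<sigma> y) \<subseteq> (\<Union>c\<in>supp y. ?g c)"
  proof
    fix x assume "x \<in> supp (mult_adj d \<sigma> y)"
    moreover obtain i k p j q l where "x = ((i, k, p), (j, q, l))"
      by (metis prod.collapse)
    ultimately show "x \<in> (\<Union>c\<in>supp y. ?g c)"
      using mult_adj_nonzero[of d \<sigma> y i k p j q l] by (force simp: supp_def)
  qed
  moreover have "(\<Union>c\<in>supp y. ?g c) \<subseteq> valid d \<times> valid d" "finite (\<Union>c\<in>supp y. ?g c)"
    using assms by (auto simp: M0_def valid_def)
  ultimately show ?thesis
    by (auto simp: F1_def intro: finite_subset)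
qed

lemma mult_mult_adj_sum:
  assumes y: "y \<in> M0 d" and "k < d i" "l < d i"
  shows "mult d (mult_adj d \<sigma> y) (i, k, l) = (\<Sum>n<d i. mult_adj d \<sigma> y ((i, k, n), (i, n, l)))"
proof -
  define W where "W = mult_adj d \<sigma> y"
  define h where "h p = W p * mmul d (munit (fst p)) (munit (snd p)) (i, k, l)" for p
  define g where "g n = ((i, k, n), (i, n, l))" for n :: nat
  have "finite (supp W)"
    using mult_adj_in_F1[OF y] by (simp add: W_def F1_def)
  have shape: "p \<in> g ` {..<d i}" if "h p \<noteq> 0" for p
  proof -
    obtain i1 k1 m j m' l1 where p: "p = ((i1, k1, m), (j, m', l1))"
      by (metis prod.collapse)
    have "mmul d (munit (i1, k1, m)) (munit (j, m', l1)) (i, k, l) \<noteq> 0"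
      using that by (simp add: h_def p)
    then show ?thesis
      by (auto simp: p g_def dest!: mmul_munit_nonzero)
  qed
  have "mult d W (i, k, l) = sum h (supp W)"
    by (simp add: mult_apply h_def)
  also have "\<dots> = (\<Sum>n<d i. h (g n))"
  proof (rule sum_reindex_nonzero)
    show "h p = 0" if "p \<in> supp W" "p \<notin> g ` {..<d i}" for p
      using that shape by blast
    show "h (g n) = 0" if "n \<in> {..<d i}" "g n \<notin> supp W" for n
      using that by (simp add: h_def supp_def)
  qed (use \<open>finite (supp W)\<close> in \<open>auto simp: g_def inj_on_def\<close>)
  also have "\<dots> = (\<Sum>n<d i. W (g n))"
  proof (intro sum.cong refl)
    fix n assume "n \<in> {..<d i}"
    then have "mmul d (munit (i, k, n)) (munit (i, n, l)) (i, k, l) = 1"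
      unfolding mmul_munit by (simp add: munit_def)
    then show "h (g n) = W (g n)"
      by (simp add: h_def g_def)
  qed
  finally show ?thesis
    by (simp add: W_def g_def)
qed

lemma mult_mult_adj:
  assumes dpos: "\<forall>i. 0 < d i" and df: "delta_form_density d \<sigma>" and y: "y \<in> M0 d"
  shows "mult d (mult_adj d \<sigma> y) = y"
proof (rule ext, clarify)
  fix i k l
  show "mult d (mult_adj d \<sigma> y) (i, k, l) = y (i, k, l)"
  proof (cases "k < d i \<and> l < d i")
    case True
    then have "mult d (mult_adj d \<sigma> y) (i, k, l)
        = (\<Sum>n<d i. cnj (sigma_inv d \<sigma> i n n) * y (i, k, l) / of_nat (d i))"
      by (simp add: mult_mult_adj_sum[OF y] mult_adj_apply)
    also have "\<dots> = cnj (\<Sum>n<d i. sigma_inv d \<sigma> i n n) * y (i, k, l) / of_nat (d i)"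
      by (simp add: sum_divide_distrib[symmetric] sum_distrib_right[symmetric])
    also have "\<dots> = y (i, k, l)"
      using sigma_inv(2)[OF df, of i] dpos by simp
    finally show ?thesis .
  next
    case False
    then have "(i, k, l) \<notin> valid d"
      by (simp add: valid_def)
    moreover have "mult d (mult_adj d \<sigma> y) \<in> M0 d"
      by (rule mult_in_M0[OF mult_adj_in_F1[OF y]])
    ultimately have "mult d (mult_adj d \<sigma> y) (i, k, l) = 0" "y (i, k, l) = 0"
      using y unfolding M0_def supp_def by blast+
    then show ?thesis by simp
  qed
qed

lemma ip1_tensor_munit_mult_adj_sum:
  assumes y: "y \<in> M0 d" and a: "(i, k, m) \<in> valid d" and b: "(j, m', l) \<in> valid d"
  shows "ip1 d \<sigma> (tensor (munit (i, k, m)) (munit (j, m', l))) (mult_adj d \<sigma> y)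
    = (\<Sum>r<d i. \<Sum>l'<d i. cnj (mult_adj d \<sigma> y ((i, k, r), (i, m', l')))
         * tensor_kernel (munit_gram d \<sigma>) ((i, k, m), (j, m', l)) ((i, k, r), (i, m', l')))"
proof -
  define W where "W = mult_adj d \<sigma> y"
  define G where "G = munit_gram d \<sigma>"
  define h where "h q = cnj (W q) * tensor_kernel G ((i, k, m), (j, m', l)) q" for q
  define g where "g x = ((i, k, fst x), (i, m', snd x))" for x :: "nat \<times> nat"
  have v: "k < d i" "m < d i" "m' < d j" "l < d j"
    using a b by (auto simp: valid_def)
  have "finite (supp W)"
    using mult_adj_in_F1[OF y] by (simp add: W_def F1_def)
  have shape: "q \<in> g ` ({..<d i} \<times> {..<d i})" if "h q \<noteq> 0" for q
  proof -
    obtain i1 k1 r j1 q1 l1 where q: "q = ((i1, k1, r), (j1, q1, l1))"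
      by (metis prod.collapse)
    have "W q \<noteq> 0" "G (i, k, m) (i1, k1, r) \<noteq> 0" "G (j, m', l) (j1, q1, l1) \<noteq> 0"
      using that by (auto simp: h_def q tensor_kernel_def)
    moreover from this(1) have "j1 = i1 \<and> k1 < d i1 \<and> r < d i1 \<and> q1 < d i1 \<and> l1 < d i1"
      using mult_adj_nonzero[of d \<sigma> y i1 k1 r j1 q1 l1] unfolding W_def q by blast
    ultimately have "i1 = i" "k1 = k" "j1 = i" "q1 = m'" "r < d i" "l1 < d i"
      using v by (auto simp: G_def munit_gram_eq q split: if_splits)
    then show ?thesis
      by (auto simp: q g_def intro!: image_eqI[where x = "(r, l1)"])
  qed
  have "ip1 d \<sigma> (tensor (munit (i, k, m)) (munit (j, m', l))) W = sum h (supp W)"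
    by (simp add: ip1_tensor_munit_left h_def G_def)
  also have "\<dots> = (\<Sum>x\<in>{..<d i} \<times> {..<d i}. h (g x))"
  proof (rule sum_reindex_nonzero)
    show "h q = 0" if "q \<in> supp W" "q \<notin> g ` ({..<d i} \<times> {..<d i})" for q
      using that shape by blast
    show "h (g x) = 0" if "x \<in> {..<d i} \<times> {..<d i}" "g x \<notin> supp W" for x
      using that by (simp add: h_def supp_def)
  qed (use \<open>finite (supp W)\<close> in \<open>auto simp: g_def inj_on_def\<close>)
  also have "\<dots> = (\<Sum>r<d i. \<Sum>l'<d i. h ((i, k, r), (i, m', l')))"
    by (simp add: g_def sum.cartesian_product case_prod_beta)
  finally show ?thesis
    by (simp add: h_def W_def G_def)
qed

lemma ip0_mmul_munit_eq_ip1: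
  fixes d :: "'i \<Rightarrow> nat"
  assumes dpos: "\<forall>i. 0 < d i" and df: "delta_form_density d \<sigma>" and y: "y \<in> M0 d"
    and a: "(i, k, m) \<in> valid d" and b: "(j, m', l) \<in> valid d"
  shows "ip0 d \<sigma> (mmul d (munit (i, k, m)) (munit (j, m', l))) y
    = ip1 d \<sigma> (tensor (munit (i, k, m)) (munit (j, m', l))) (mult_adj d \<sigma> y)"
proof -
  define \<tau> where "\<tau> = sigma_inv d \<sigma> i"
  have v: "k < d i" "m < d i" "m' < d j" "l < d j"
    using a b by (auto simp: valid_def)
  have entry: "cnj (mult_adj d \<sigma> y ((i, k, r), (i, m', l')))
      * tensor_kernel (munit_gram d \<sigma>) ((i, k, m), (j, m', l)) ((i, k, r), (i, m', l'))
      = (\<sigma> (i, m, r) * \<tau> r m') * (if j = i then of_nat (d i) * (cnj (y (i, k, l')) * \<sigma> (i, l, l')) else 0)"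
    if "r < d i" "l' < d i" for r l'
  proof (cases "j = i")
    case True
    have "(of_nat (d i) :: complex) \<noteq> 0"
      using dpos by simp
    with True v that show ?thesis
      by (simp add: \<tau>_def tensor_kernel_def mult_adj_apply munit_gram_eq field_simps)
  next
    case False
    with v that show ?thesis
      by (simp add: tensor_kernel_def munit_gram_eq)
  qed
  have "ip1 d \<sigma> (tensor (munit (i, k, m)) (munit (j, m', l))) (mult_adj d \<sigma> y)
      = (\<Sum>r<d i. \<sigma> (i, m, r) * \<tau> r m')
        * (if j = i then of_nat (d i) * (\<Sum>l'<d i. cnj (y (i, k, l')) * \<sigma> (i, l, l')) else 0)"
    unfolding ip1_tensor_munit_mult_adj_sum[OF y a b]
    unfolding sum_distrib_left[of "of_nat (d i)"] if_distrib[of "\<lambda>z. _ * z"] sum_product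
    by (simp add: entry)
  also have "\<dots> = (if j = i \<and> m' = m then ip0 d \<sigma> (munit (i, k, l)) y else 0)"
    using v sigma_mult_sigma_inv[OF df] ip0_munit_left[of k d i l \<sigma> y] by (auto simp: \<tau>_def)
  also have "\<dots> = ip0 d \<sigma> (mmul d (munit (i, k, m)) (munit (j, m', l))) y"
    using v by (auto simp: mmul_munit ip0_zero_left)
  finally show ?thesis ..
qed

lemma ip0_mult_eq_ip1_mult_adj:
  assumes dpos: "\<forall>i. 0 < d i" and df: "delta_form_density d \<sigma>" and X: "X \<in> F1 d" and y: "y \<in> M0 d"
  shows "ip0 d \<sigma> (mult d X) y = ip1 d \<sigma> X (mult_adj d \<sigma> y)"
proof -
  have "ip0 d \<sigma> (mmul d (munit (fst p)) (munit (snd p))) y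
      = ip1 d \<sigma> (tensor (munit (fst p)) (munit (snd p))) (mult_adj d \<sigma> y)" if "p \<in> supp X" for p
  proof -
    obtain i k m j m' l where "p = ((i, k, m), (j, m', l))"
      by (metis prod.collapse)
    moreover have "p \<in> valid d \<times> valid d"
      using X that by (auto simp: F1_def)
    ultimately show ?thesis
      using ip0_mmul_munit_eq_ip1[OF dpos df y] by auto
  qed
  note termwise = this
  have "finite (supp X)"
    using X by (simp add: F1_def)
  then have "ip0 d \<sigma> (mult d X) y = (\<Sum>p\<in>supp X. X p * ip0 d \<sigma> (mmul d (munit (fst p)) (munit (snd p))) y)"
    by (rule ip0_mult)
  also have "\<dots> = (\<Sum>p\<in>supp X. X p * ip1 d \<sigma> (tensor (munit (fst p)) (munit (snd p))) (mult_adj d \<sigma> y))"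
    by (simp add: termwise)
  also have "\<dots> = ip1 d \<sigma> X (mult_adj d \<sigma> y)"
    by (rule ip1_eq_sum_left[symmetric])
  finally show ?thesis .
qed

lemma norm0_mult_le_norm1:
  assumes dpos: "\<forall>i. 0 < d i" and df: "delta_form_density d \<sigma>" and X: "X \<in> F1 d"
  shows "norm0 d \<sigma> (mult d X) \<le> norm1 d \<sigma> X"
proof -
  define y where "y = mult d X"
  define W where "W = mult_adj d \<sigma> y"
  have y: "y \<in> M0 d"
    using mult_in_M0[OF X] by (simp add: y_def)
  have W: "W \<in> F1 d"
    using mult_adj_in_F1[OF y] by (simp add: W_def)
  have XW: "ip1 d \<sigma> X W = ip0 d \<sigma> y y"
    using ip0_mult_eq_ip1_mult_adj[OF dpos df X y] by (simp add: y_def W_def)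
  have WW: "ip1 d \<sigma> W W = ip0 d \<sigma> y y"
    using ip0_mult_eq_ip1_mult_adj[OF dpos df W y] mult_mult_adj[OF dpos df y] by (simp add: W_def)
  have "Re (ip1 d \<sigma> (\<lambda>p. X p - W p) (\<lambda>p. X p - W p)) = Re (ip1 d \<sigma> X X) - Re (ip0 d \<sigma> y y)"
    using ip1_diff_self[OF X W] ip1_swap[OF df X W] XW WW by simp
  moreover have "0 \<le> Re (ip1 d \<sigma> (\<lambda>p. X p - W p) (\<lambda>p. X p - W p))"
    by (rule ip1_nonneg[OF df F1_diff[OF X W]])
  ultimately have "Re (ip0 d \<sigma> y y) \<le> Re (ip1 d \<sigma> X X)"
    by simp
  then show ?thesis
    unfolding norm0_def norm1_def y_def[symmetric] by simp
qed

theorem proposition2p4: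
  fixes d :: "'i \<Rightarrow> nat" and \<sigma> :: "'i \<times> nat \<times> nat \<Rightarrow> complex"
  assumes "\<forall>i. d i > 0"
    and "delta_form_density d \<sigma>"
  shows "(\<forall>X\<in>F1 d. mult d X \<in> M0 d)
     \<and> (\<exists>C. \<forall>X\<in>F1 d. norm0 d \<sigma> (mult d X) \<le> C * norm1 d \<sigma> X)
     \<and> (\<exists>T. (\<forall>y\<in>M0 d. T y \<in> F1 d)
            \<and> (\<forall>X\<in>F1 d. \<forall>y\<in>M0 d. ip0 d \<sigma> (mult d X) y = ip1 d \<sigma> X (T y))
            \<and> (\<forall>y\<in>M0 d. mult d (T y) = y))"
proof (intro conjI exI[of _ 1] exI[of _ "mult_adj d \<sigma>"] ballI)
  fix X assume "X \<in> F1 d"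
  then show "mult d X \<in> M0 d"
    and "norm0 d \<sigma> (mult d X) \<le> 1 * norm1 d \<sigma> X"
    using mult_in_M0 norm0_mult_le_norm1[OF assms] by auto
  fix y assume "y \<in> M0 d"
  with \<open>X \<in> F1 d\<close> show "ip0 d \<sigma> (mult d X) y = ip1 d \<sigma> X (mult_adj d \<sigma> y)"
    by (rule ip0_mult_eq_ip1_mult_adj[OF assms])
next
  fix y assume "y \<in> M0 d"
  then show "mult_adj d \<sigma> y \<in> F1 d" and "mult d (mult_adj d \<sigma> y) = y"
    using mult_adj_in_F1 mult_mult_adj[OF assms] by auto
qed

end
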